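(* For every simple graph $G$ of order $n$ with spectral radius $\mu(G)$, \[ \frac{n}{n - \mu(G)} < \phi(G) + \frac{1}{3}. \]
   Context: $\mu(G)$ denotes the largest eigenvalue of the adjacency matrix of $G$. $\phi(G)$ is the smallest integer $r$ for which the vertex set has a partition $V(G) = V_1 \cup \dots \cup V_r$ into $r$ parts such that, writing $n_i = |V_i|$, every vertex $v \in V_i$ has degree $d(v) \le n - n_i$, for all $i = 1,\dots,r$. *)

theory Defs
  imports "HOL-Analysis.Analysis"
begin

text \<open>A finite simple graph on the finite vertex type 'a, given by an edge relation
  that is symmetric and irreflexive. The order n of the graph is CARD('a).\<close>

definition simple_graph :: "('a::finite \<Rightarrow> 'a \<Rightarrow> bool) \<Rightarrow> bool" where
  "simple_graph E \<longleftrightarrow> (\<forall>u v. E u v \<longrightarrow> E v u) \<and> (\<forall>v. \<not> E v v)"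

definition degree :: "('a::finite \<Rightarrow> 'a \<Rightarrow> bool) \<Rightarrow> 'a \<Rightarrow> nat" where
  "degree E v = card {u. E v u}"

definition adjacency_matrix :: "('a::finite \<Rightarrow> 'a \<Rightarrow> bool) \<Rightarrow> real ^ 'a ^ 'a" where
  "adjacency_matrix E = (\<chi> i j. if E i j then 1 else 0)"

definition mu :: "('a::finite \<Rightarrow> 'a \<Rightarrow> bool) \<Rightarrow> real" where
  "mu E = Max {c. \<exists>x::real ^ 'a. x \<noteq> 0 \<and> adjacency_matrix E *v x = c *\<^sub>R x}"

text \<open>A partition of V into r (nonempty) parts V_0,...,V_{r-1}, encoded by the part index
  function f, such that every vertex v in part V_i has d(v) \<le> n - |V_i|.\<close>

definition good_partition :: "('a::finite \<Rightarrow> 'a \<Rightarrow> bool) \<Rightarrow> nat \<Rightarrow> ('a \<Rightarrow> nat) \<Rightarrow> bool" where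
  "good_partition E r f \<longleftrightarrow> f ` UNIV = {0..<r} \<and>
     (\<forall>v. degree E v \<le> CARD('a) - card {u. f u = f v})"

definition phi :: "('a::finite \<Rightarrow> 'a \<Rightarrow> bool) \<Rightarrow> nat" where
  "phi E = (LEAST r. \<exists>f. good_partition E r f)"

end

theory Submission
  imports Defs
begin

text \<open>
  Spectral input: the adjacency matrix is symmetric, so its largest eigenvalue \<mu> exists
  (a maximiser of the Rayleigh quotient on the unit sphere is an eigenvector, and a
  symmetric matrix has only finitely many eigenvalues).  If \<open>x\<close> is an eigenvector for
  \<mu>, then \<open>y = |x|\<close> is a nonnegative, nonzero vector such that \<open>\<mu> y\<^sub>v\<close> is at most
  the sum of \<open>y\<close> over the neighbours of \<open>v\<close>.

  Combinatorial input: for a partition into \<open>r\<close> parts, \<open>\<Sum>\<^sub>v 1/|part(v)| = r\<close>.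
  Let \<open>b\<close> be the largest part size.  Then \<open>r \<ge> n/b\<close>, which settles the case \<open>\<mu> \<le> n - b\<close>.
  Otherwise let \<open>\<theta>\<close> be the largest sum of \<open>y\<close> over at most \<open>n - b\<close> vertices and
  \<open>H = {v. \<mu> y\<^sub>v > \<theta>}\<close>; \<open>H\<close> is nonempty and misses the largest part.  Comparing the
  weights on and off \<open>H\<close> bounds each part size on \<open>H\<close> from above, and the
  harmonic-arithmetic mean inequality on \<open>H\<close> gives
  \<open>r \<ge> 1 + (n-b)\<^sup>2 / ((n-b) b - \<mu> (b - n + \<mu>))\<close>,
  which exceeds \<open>n/(n-\<mu>) - 1/3\<close> by an elementary polynomial inequality.
\<close>

section \<open>Eigenvectors of symmetric real matrices\<close>

lemma symmetric_matrix_inner: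
  fixes A :: "real^'n^'n"
  assumes "transpose A = A"
  shows "(A *v x) \<bullet> y = x \<bullet> (A *v y)"
proof -
  have "A *v x = x v* A" using transpose_matrix_vector[of A x] assms by simp
  then show ?thesis by (simp add: dot_lmul_matrix)
qed

text \<open>A unit vector maximising the quadratic form \<open>x \<bullet> A x\<close> relative to \<open>x \<bullet> x\<close>
  is an eigenvector: moving along the residual \<open>h = A x\<^sub>0 - l x\<^sub>0\<close> would otherwise
  increase the quotient to first order.\<close>

lemma rayleigh_maximiser_is_eigenvector:
  fixes A :: "real^'n^'n"
  assumes sym: "transpose A = A" and unit: "x0 \<bullet> x0 = 1"
    and bound: "\<And>y. y \<bullet> (A *v y) \<le> l * (y \<bullet> y)"
    and l: "l = x0 \<bullet> (A *v x0)"
  shows "A *v x0 = l *\<^sub>R x0"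
proof -
  let ?q = "\<lambda>x. x \<bullet> (A *v x)"
  define h where "h = A *v x0 - l *\<^sub>R x0"
  have h_orth: "h \<bullet> x0 = 0"
  proof -
    have "h \<bullet> x0 = (A *v x0) \<bullet> x0 - l * (x0 \<bullet> x0)" by (simp add: h_def inner_diff_left)
    also have "(A *v x0) \<bullet> x0 = l" unfolding l by (rule inner_commute)
    finally show ?thesis using unit by simp
  qed
  define g where "g = ?q h - l * (h \<bullet> h)"
  have g_nonpos: "g \<le> 0" using bound[of h] by (simp add: g_def)
  have expand: "?q (x0 + t *\<^sub>R h) - l * ((x0 + t *\<^sub>R h) \<bullet> (x0 + t *\<^sub>R h))
      = 2 * t * (h \<bullet> h) + t\<^sup>2 * g" for t
  proof -
    have s: "x0 \<bullet> (A *v h) = (A *v x0) \<bullet> h" using symmetric_matrix_inner[OF sym, of x0 h] by simp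
    have "(A *v x0) \<bullet> h = h \<bullet> h + l * (x0 \<bullet> h)"
      by (simp add: h_def inner_diff_left inner_diff_right inner_commute algebra_simps)
    then show ?thesis using s h_orth unit l
      by (simp add: g_def matrix_vector_right_distrib matrix_vector_mult_scaleR inner_add_left
          inner_add_right algebra_simps power2_eq_square inner_commute)
  qed
  have "h \<bullet> h = 0"
  proof (rule ccontr)
    assume "h \<bullet> h \<noteq> 0"
    then have hh: "h \<bullet> h > 0" by (simp add: inner_gt_zero_iff)
    define t where "t = (h \<bullet> h) / (1 - g)"
    have t_pos: "t > 0" using hh g_nonpos by (simp add: t_def)
    have "t * (2 * (h \<bullet> h) + t * g) \<le> 0"
      using bound[of "x0 + t *\<^sub>R h"] expand[of t] by (simp add: power2_eq_square algebra_simps)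
    then have "2 * (h \<bullet> h) + t * g \<le> 0" using t_pos by (simp add: mult_le_0_iff)
    moreover have "t * g = t - h \<bullet> h" using g_nonpos by (simp add: t_def field_simps)
    ultimately show False using hh t_pos by linarith
  qed
  then show ?thesis unfolding h_def by simp
qed

text \<open>Existence of a maximiser, by compactness of the unit sphere.\<close>

lemma symmetric_matrix_has_eigenvector:
  fixes A :: "real^'n^'n"
  assumes sym: "transpose A = A"
  shows "\<exists>c x. x \<noteq> 0 \<and> A *v x = c *\<^sub>R x"
proof -
  let ?q = "\<lambda>x. x \<bullet> (A *v x)"
  have cont: "continuous_on (sphere 0 1) ?q"
    by (intro continuous_intros linear_continuous_on matrix_vector_mul_linear)
  have "axis undefined (1::real) \<in> sphere (0::real^'n) 1" by simp
  then have ne: "sphere (0::real^'n) 1 \<noteq> {}" by blast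
  obtain x0 where x0: "x0 \<in> sphere 0 1" and max: "\<And>y. y \<in> sphere 0 1 \<Longrightarrow> ?q y \<le> ?q x0"
    using continuous_attains_sup[OF compact_sphere ne cont] by blast
  have bound: "?q y \<le> ?q x0 * (y \<bullet> y)" for y
  proof (cases "y = 0")
    case False
    define y' where "y' = (1 / norm y) *\<^sub>R y"
    have "y' \<in> sphere 0 1" using False by (simp add: y'_def)
    then have "?q y' \<le> ?q x0" by (rule max)
    moreover have "?q y' = ?q y / (norm y)\<^sup>2"
      by (simp add: y'_def matrix_vector_mult_scaleR power2_eq_square)
    moreover have "y \<bullet> y = (norm y)\<^sup>2" by (simp add: dot_square_norm)
    ultimately show ?thesis using False by (simp add: divide_le_eq mult.commute)
  qed simp
  have "x0 \<bullet> x0 = 1" using x0 by (simp add: dot_square_norm)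
  then have "A *v x0 = ?q x0 *\<^sub>R x0"
    using rayleigh_maximiser_is_eigenvector[OF sym _ bound] by blast
  moreover have "x0 \<noteq> 0" using x0 by auto
  ultimately show ?thesis by blast
qed

text \<open>Eigenvectors for distinct eigenvalues are orthogonal, hence independent; so a symmetric
  matrix has finitely many eigenvalues.\<close>

lemma symmetric_matrix_eigenvalues_finite:
  fixes A :: "real^'n^'n"
  assumes sym: "transpose A = A"
  shows "finite {c. \<exists>x. x \<noteq> 0 \<and> A *v x = c *\<^sub>R x}"
proof -
  define S where "S = {c. \<exists>x. x \<noteq> 0 \<and> A *v x = c *\<^sub>R x}"
  define ev where "ev c = (SOME x. x \<noteq> 0 \<and> A *v x = c *\<^sub>R x)" for c
  have ev: "ev c \<noteq> 0 \<and> A *v ev c = c *\<^sub>R ev c" if "c \<in> S" for c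
    using that unfolding S_def ev_def by (metis (mono_tags, lifting) mem_Collect_eq someI)
  have orth: "ev c \<bullet> ev d = 0" if "c \<in> S" "d \<in> S" "c \<noteq> d" for c d
  proof -
    have "c * (ev c \<bullet> ev d) = (A *v ev c) \<bullet> ev d" using ev[OF that(1)] by simp
    also have "\<dots> = ev c \<bullet> (A *v ev d)" by (rule symmetric_matrix_inner[OF sym])
    also have "\<dots> = d * (ev c \<bullet> ev d)" using ev[OF that(2)] by simp
    finally have "(c - d) * (ev c \<bullet> ev d) = 0" by (simp add: algebra_simps)
    then show ?thesis using that(3) by simp
  qed
  have inj: "inj_on ev S"
    using orth ev by (metis inj_onI inner_eq_zero_iff)
  have "pairwise orthogonal (ev ` S)"
    unfolding pairwise_def orthogonal_def using orth by (metis imageE)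
  moreover have "0 \<notin> ev ` S" using ev by auto
  ultimately have "independent (ev ` S)" by (rule pairwise_orthogonal_independent)
  then have "finite (ev ` S)" using independent_bound by blast
  then show ?thesis using finite_imageD inj unfolding S_def by blast
qed

section \<open>The eigenvalue \<mu> of a simple graph\<close>

lemma adjacency_matrix_symmetric:
  assumes "simple_graph E"
  shows "transpose (adjacency_matrix E) = adjacency_matrix E"
  using assms unfolding simple_graph_def adjacency_matrix_def transpose_def
  by (auto simp: vec_eq_iff)

lemma mu_is_eigenvalue:
  assumes "simple_graph E"
  shows "\<exists>x. x \<noteq> 0 \<and> adjacency_matrix E *v x = mu E *\<^sub>R x"
proof -
  let ?S = "{c. \<exists>x. x \<noteq> 0 \<and> adjacency_matrix E *v x = c *\<^sub>R x}"
  have "finite ?S"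
    using symmetric_matrix_eigenvalues_finite[OF adjacency_matrix_symmetric[OF assms]] .
  moreover have "?S \<noteq> {}"
    using symmetric_matrix_has_eigenvector[OF adjacency_matrix_symmetric[OF assms]] by blast
  ultimately have "Max ?S \<in> ?S" by (rule Max_in)
  then show ?thesis unfolding mu_def by blast
qed

lemma adjacency_matrix_row:
  "(adjacency_matrix E *v x) $ v = sum (\<lambda>u. x $ u) {u. E v u}"
proof -
  have "(adjacency_matrix E *v x) $ v = (\<Sum>u\<in>UNIV. (if E v u then 1 else 0) * x $ u)"
    by (simp add: adjacency_matrix_def matrix_vector_mult_def)
  also have "\<dots> = (\<Sum>u\<in>UNIV. if E v u then x $ u else 0)" by (rule sum.cong) auto
  also have "\<dots> = sum (\<lambda>u. x $ u) {u. E v u}" by (simp add: sum.If_cases)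
  finally show ?thesis .
qed

text \<open>The absolute values of an eigenvector for \<mu> form a nonzero nonnegative vector \<open>y\<close>
  such that \<open>|\<mu>| y\<^sub>v\<close> is at most the sum of \<open>y\<close> over the neighbours of \<open>v\<close>; this is the
  only spectral information used later.\<close>

lemma mu_subeigenvector:
  assumes "simple_graph E"
  obtains y :: "'a::finite \<Rightarrow> real"
  where "\<And>v. y v \<ge> 0" "\<exists>v. y v > 0" "\<And>v. \<bar>mu E\<bar> * y v \<le> sum y {u. E v u}"
proof -
  obtain x where x: "x \<noteq> 0" "adjacency_matrix E *v x = mu E *\<^sub>R x"
    using mu_is_eigenvalue[OF assms] by blast
  have "\<bar>mu E\<bar> * \<bar>x $ v\<bar> \<le> sum (\<lambda>u. \<bar>x $ u\<bar>) {u. E v u}" for v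
  proof -
    have "\<bar>mu E\<bar> * \<bar>x $ v\<bar> = \<bar>(adjacency_matrix E *v x) $ v\<bar>" using x(2) by (simp add: abs_mult)
    also have "\<dots> = \<bar>sum (\<lambda>u. x $ u) {u. E v u}\<bar>" by (simp add: adjacency_matrix_row)
    also have "\<dots> \<le> sum (\<lambda>u. \<bar>x $ u\<bar>) {u. E v u}" by (rule sum_abs)
    finally show ?thesis .
  qed
  moreover have "\<exists>v. \<bar>x $ v\<bar> > 0" using x(1) by (simp add: vec_eq_iff)
  ultimately show ?thesis using that[of "\<lambda>v. \<bar>x $ v\<bar>"] by simp
qed

text \<open>Each term
  is bounded below by the tangent line of \<open>1/t\<close> at the mean \<open>m\<close>.\<close>

lemma harmonic_arithmetic_mean:
  fixes t :: "'a \<Rightarrow> real"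
  assumes fin: "finite H" and ne: "H \<noteq> {}" and pos: "\<And>v. v \<in> H \<Longrightarrow> t v > 0"
  shows "real (card H) ^ 2 / sum t H \<le> (\<Sum>v\<in>H. 1 / t v)"
proof -
  define T where "T = sum t H"
  define N where "N = real (card H)"
  have N_pos: "N > 0" using fin ne by (simp add: N_def card_gt_0_iff)
  have T_pos: "T > 0" unfolding T_def using fin ne pos by (simp add: sum_pos)
  define m where "m = T / N"
  have m_pos: "m > 0" using N_pos T_pos by (simp add: m_def)
  have tangent: "2/m - t v/m\<^sup>2 \<le> 1 / t v" if "v \<in> H" for v
  proof -
    have tv: "t v > 0" using pos that .
    have "1 / t v - (2/m - t v/m\<^sup>2) = (t v - m)\<^sup>2 / (t v * m\<^sup>2)"
      using tv m_pos by (simp add: field_simps power2_eq_square)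
    also have "\<dots> \<ge> 0" using tv m_pos by simp
    finally show ?thesis by linarith
  qed
  have "(\<Sum>v\<in>H. 2/m - t v/m\<^sup>2) \<le> (\<Sum>v\<in>H. 1 / t v)"
    using tangent by (rule sum_mono)
  moreover have "(\<Sum>v\<in>H. 2/m - t v/m\<^sup>2) = 2*N/m - T/m\<^sup>2"
    by (simp add: sum_subtractf sum_divide_distrib[symmetric] T_def N_def)
  moreover have "2*N/m - T/m\<^sup>2 = N\<^sup>2 / T"
    using N_pos T_pos by (simp add: m_def field_simps power2_eq_square)
  ultimately show ?thesis by (simp add: N_def T_def)
qed

text \<open>For \<open>K > 0\<close> the function \<open>x \<mapsto> x\<^sup>2/(x b - K) - x/b = (K/b) \<cdot> x/(x b - K)\<close> is
  nonincreasing where \<open>x b > K\<close>.\<close>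

lemma quotient_antimono:
  fixes N M b K :: real
  assumes b: "0 < b" and K: "0 < K" and NM: "N \<le> M" and T0: "0 < N * b - K"
  shows "M\<^sup>2 / (M * b - K) - M / b \<le> N\<^sup>2 / (N * b - K) - N / b"
proof -
  have T1: "0 < M * b - K" using NM b T0 by (smt (verit) mult_right_mono)
  have "M * (N * b - K) \<le> N * (M * b - K)"
    using NM K by (simp add: algebra_simps mult_right_mono)
  then have "M / (M * b - K) \<le> N / (N * b - K)"
    using T0 T1 by (simp add: field_simps)
  then have "K / b * (M / (M * b - K)) \<le> K / b * (N / (N * b - K))"
    using K b by (intro mult_left_mono) auto
  moreover have "N\<^sup>2 / (N * b - K) - N / b = K / b * (N / (N * b - K))"
    using T0 b by (simp add: field_simps power2_eq_square)
  moreover have "M\<^sup>2 / (M * b - K) - M / b = K / b * (M / (M * b - K))"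
    using T1 b by (simp add: field_simps power2_eq_square)
  ultimately show ?thesis by simp
qed

text \<open>With \<open>T = (n-b) b - (n-u)(b-u)\<close> and \<open>u = n - \<mu>\<close>,
  the claim \<open>n/u - 1/3 < 1 + (n-b)\<^sup>2/T\<close> reduces, when \<open>3n > 4u\<close>, to the identity
  \<open>4(3n-u)(3u(n-b)\<^sup>2 - (3n-4u)T) = (2(3n-u)b + 4u\<^sup>2 - 9nu)\<^sup>2 + u\<^sup>2 n (3n-4u)\<close>.\<close>

lemma final_estimate:
  fixes n b u T :: real
  assumes u: "0 < u" and ub: "u < b" and bn: "b < n"
    and T: "T = (n-b)*b - (n-u)*(b-u)" and T_pos: "T > 0"
  shows "n/u - 1/3 < 1 + (n-b)\<^sup>2/T"
proof -
  have key: "(3*n - 4*u)*T < 3*u*(n-b)\<^sup>2"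
  proof (cases "3*n - 4*u \<le> 0")
    case True
    have "(3*n - 4*u)*T \<le> 0" using True T_pos by (simp add: mult_nonpos_nonneg)
    moreover have "3*u*(n-b)\<^sup>2 > 0" using u bn by simp
    ultimately show ?thesis by linarith
  next
    case False
    have id: "4*(3*n-u)*(3*u*(n-b)\<^sup>2 - (3*n - 4*u)*T)
        = (2*(3*n-u)*b + 4*u\<^sup>2 - 9*n*u)\<^sup>2 + u\<^sup>2*n*(3*n-4*u)"
      unfolding T by (simp add: algebra_simps power2_eq_square)
    have "u\<^sup>2*n*(3*n-4*u) > 0" using False u ub bn by simp
    then have "4*(3*n-u)*(3*u*(n-b)\<^sup>2 - (3*n - 4*u)*T) > 0"
      unfolding id by (simp add: add_nonneg_pos)
    moreover have "4*(3*n-u) > 0" using False u by (simp add: algebra_simps)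
    ultimately show ?thesis by (simp add: zero_less_mult_iff)
  qed
  have "(3*n-4*u)/(3*u) < (n-b)\<^sup>2/T"
    using key u T_pos by (simp add: field_simps)
  moreover have "n/u - 1/3 = 1 + (3*n-4*u)/(3*u)" using u by (simp add: field_simps)
  ultimately show ?thesis by linarith
qed

section \<open>Top sums of a weight function\<close>

definition top_sum :: "('a::finite \<Rightarrow> real) \<Rightarrow> nat \<Rightarrow> real" where
  "top_sum y k = Max (sum y ` {S. card S \<le> k})"

lemma sum_le_top_sum: "card S \<le> k \<Longrightarrow> sum y S \<le> top_sum y k"
  unfolding top_sum_def by (rule Max_ge) auto

lemma top_sum_attained: "\<exists>S. card S \<le> k \<and> top_sum y k = sum y S"
proof -
  have "{S::'a set. card S \<le> k} \<noteq> {}" by (metis card.empty empty_iff mem_Collect_eq zero_le)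
  then have "top_sum y k \<in> sum y ` {S. card S \<le> k}"
    unfolding top_sum_def by (intro Max_in) auto
  then show ?thesis by auto
qed

lemma sum_le_separated:
  fixes y :: "'a::finite \<Rightarrow> real"
  assumes zH: "\<And>v. v \<in> H \<Longrightarrow> z \<le> y v" and zn: "\<And>u. u \<notin> H \<Longrightarrow> y u \<le> z" and z0: "z \<ge> 0"
    and S: "card S \<le> k"
  shows "sum y S \<le> sum y H + (real k - real (card H)) * z"
proof -
  have a: "sum y S = sum y (S \<inter> H) + sum y (S - H)" by (rule sum.Int_Diff) simp
  have b: "sum y H = sum y (H \<inter> S) + sum y (H - S)" by (rule sum.Int_Diff) simp
  have c: "sum y (S - H) \<le> real (card (S - H)) * z"
    using sum_bounded_above[of "S - H" y z] zn by auto
  have d: "real (card (H - S)) * z \<le> sum y (H - S)"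
    using sum_bounded_below[of "H - S" z y] zH by auto
  have e: "card S = card (S \<inter> H) + card (S - H)" by (rule card_Int_Diff) simp
  have f: "card H = card (H \<inter> S) + card (H - S)" by (rule card_Int_Diff) simp
  have "real (card (S - H)) \<le> real k - real (card H) + real (card (H - S))"
    using e f S by (simp add: Int_commute)
  then have "real (card (S - H)) * z \<le> (real k - real (card H) + real (card (H - S))) * z"
    using z0 by (rule mult_right_mono)
  then show ?thesis using a b c d by (simp add: Int_commute algebra_simps)
qed

text \<open>Each of the \<open>r\<close> parts contributes \<open>|V\<^sub>i| \<cdot> 1/|V\<^sub>i| = 1\<close>.\<close>

lemma sum_inverse_class_size:
  fixes f :: "'a::finite \<Rightarrow> nat"
  assumes part: "f ` UNIV = {0..<r}"
  shows "(\<Sum>v\<in>UNIV. 1 / real (card {u. f u = f v})) = real r"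
proof -
  have "(\<Sum>v\<in>UNIV. 1 / real (card {u. f u = f v}))
      = (\<Sum>i\<in>f ` UNIV. \<Sum>v\<in>{x. x \<in> UNIV \<and> f x = i}. 1 / real (card {u. f u = f v}))"
    by (rule sum.image_gen) simp
  also have "\<dots> = (\<Sum>i\<in>f ` UNIV. 1)"
  proof (rule sum.cong[OF refl])
    fix i assume "i \<in> f ` UNIV"
    then obtain v where v: "f v = i" by blast
    have "(\<Sum>v\<in>{x. x \<in> UNIV \<and> f x = i}. 1 / real (card {u. f u = f v}))
        = (\<Sum>v\<in>{x. f x = i}. 1 / real (card {u. f u = i}))"
      by (rule sum.cong) auto
    also have "\<dots> = 1" using v by (auto simp: card_gt_0_iff)
    finally show "(\<Sum>v\<in>{x. x \<in> UNIV \<and> f x = i}. 1 / real (card {u. f u = f v})) = 1" .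
  qed
  also have "\<dots> = real r" using part by simp
  finally show ?thesis .
qed

section \<open>The main estimate\<close>

text \<open>The abstract setting: a nonnegative nonzero weight \<open>y\<close> with \<open>c y\<^sub>v \<le> sum y (Nb v)\<close>
  (a sub-eigenvector for \<open>c > 0\<close>), and a partition \<open>f\<close> into \<open>r\<close> parts such that each
  neighbourhood \<open>Nb v\<close> fits beside the part of \<open>v\<close>.\<close>

locale subeigen_partition =
  fixes y :: "'a::finite \<Rightarrow> real" and Nb :: "'a \<Rightarrow> 'a set" and f :: "'a \<Rightarrow> nat"
    and c :: real and r :: nat
  assumes y_nonneg: "\<And>v. y v \<ge> 0"
    and y_nonzero: "\<exists>v. y v > 0"
    and c_pos: "c > 0"
    and subeigen: "\<And>v. c * y v \<le> sum y (Nb v)"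
    and loopless: "\<And>v. v \<notin> Nb v"
    and degree_bound: "\<And>v. card (Nb v) + card {u. f u = f v} \<le> CARD('a)"
    and parts: "f ` UNIV = {0..<r}"
begin

definition part_size :: "'a \<Rightarrow> nat" where
  "part_size v = card {u. f u = f v}"

definition max_part :: nat where
  "max_part = Max (range part_size)"

lemma part_size_pos: "part_size v \<ge> 1"
proof -
  have "v \<in> {u. f u = f v}" by simp
  then show ?thesis unfolding part_size_def by (simp add: Suc_le_eq card_gt_0_iff; blast)
qed

lemma part_size_le_max: "part_size v \<le> max_part"
  unfolding max_part_def by (rule Max_ge) auto

lemma max_part_attained: "\<exists>w. part_size w = max_part"
  unfolding max_part_def
  by (metis (mono_tags, lifting) Max_in UNIV_not_empty finite finite_imageI image_iff image_is_empty)

lemma max_part_pos: "max_part \<ge> 1"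
  using part_size_pos part_size_le_max le_trans by blast

lemma max_part_le_card: "max_part \<le> CARD('a)"
  using degree_bound part_size_le_max max_part_attained unfolding part_size_def by (metis le_add2 le_trans)

lemma sum_inverse_part_size: "(\<Sum>v\<in>UNIV. 1 / real (part_size v)) = real r"
  unfolding part_size_def by (rule sum_inverse_class_size[OF parts])

text \<open>Every term \<open>1/|part(v)|\<close> is at least \<open>1/b\<close>, so \<open>r \<ge> n/b\<close>.\<close>

lemma card_div_max_part_le: "real CARD('a) / real max_part \<le> real r"
proof -
  have "(\<Sum>v\<in>(UNIV::'a set). 1 / real max_part) \<le> (\<Sum>v\<in>UNIV. 1 / real (part_size v))"
    using part_size_pos part_size_le_max max_part_pos
    by (intro sum_mono divide_left_mono) (auto simp: Suc_le_eq intro!: mult_pos_pos)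
  then show ?thesis using sum_inverse_part_size by simp
qed

definition peak :: real where
  "peak = Max (range y)"

lemma peak_attained: "\<exists>v. y v = peak"
  unfolding peak_def
  by (metis (mono_tags, lifting) Max_in UNIV_not_empty finite finite_imageI image_iff image_is_empty)

lemma y_le_peak: "y v \<le> peak"
  unfolding peak_def by (rule Max_ge) auto

lemma peak_pos: "peak > 0"
  using y_nonzero y_le_peak by (meson less_le_trans)

lemma sum_le_card_peak: "sum y S \<le> real (card S) * peak"
  using sum_bounded_above[of S y peak] y_le_peak by simp

text \<open>Evaluating the sub-eigenvector inequality at a peak vertex: \<open>c < n\<close>.\<close>

lemma c_less_card: "c < real CARD('a)"
proof -
  obtain v where v: "y v = peak" using peak_attained by blast
  have "Nb v \<subset> UNIV" using loopless by blast
  then have "card (Nb v) < CARD('a)" by (rule psubset_card_mono[OF finite])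
  then have "real (card (Nb v)) * peak < real CARD('a) * peak" using peak_pos by simp
  moreover have "c * peak \<le> real (card (Nb v)) * peak"
    using subeigen[of v] sum_le_card_peak[of "Nb v"] v by simp
  ultimately show ?thesis using peak_pos by (simp add: mult_less_cancel_right)
qed

text \<open>If \<open>c \<le> n - b\<close>, the crude bound \<open>r \<ge> n/b\<close> already suffices.\<close>

lemma estimate_if_c_small:
  assumes "c \<le> real CARD('a) - real max_part"
  shows "real CARD('a) / (real CARD('a) - c) < real r + 1/3"
proof -
  have "real CARD('a) / (real CARD('a) - c) \<le> real CARD('a) / real max_part"
    using assms max_part_pos by (intro divide_left_mono) auto
  then show ?thesis using card_div_max_part_le by linarith
qed

text \<open>A vertex of a largest part has at most \<open>n - b\<close> neighbours, so it is
  never high.\<close>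

definition threshold :: real where
  "threshold = top_sum y (CARD('a) - max_part)"

definition high :: "'a set" where
  "high = {v. threshold < c * y v}"

lemma largest_part_not_high:
  assumes "part_size w = max_part" and "f u = f w"
  shows "u \<notin> high"
proof -
  have "part_size u = max_part" using assms unfolding part_size_def by simp
  then have "card (Nb u) \<le> CARD('a) - max_part"
    using degree_bound[of u] unfolding part_size_def by simp
  then have "sum y (Nb u) \<le> threshold" unfolding threshold_def by (rule sum_le_top_sum)
  then have "c * y u \<le> threshold" using subeigen[of u] by linarith
  then show ?thesis unfolding high_def by simp
qed

lemma card_high_le: "card high \<le> CARD('a) - max_part"
proof -
  obtain w where w: "part_size w = max_part" using max_part_attained by blast
  then have "high \<subseteq> UNIV - {u. f u = f w}" using largest_part_not_high by blast
  then have "card high \<le> card (UNIV - {u. f u = f w})" by (rule card_mono[rotated]) simp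
  also have "\<dots> = CARD('a) - max_part"
    using w by (simp add: card_Diff_subset part_size_def)
  finally show ?thesis .
qed

lemma high_nonempty:
  assumes "real CARD('a) - real max_part < c"
  shows "high \<noteq> {}"
proof
  assume empty: "high = {}"
  obtain v where v: "y v = peak" using peak_attained by blast
  obtain S where S: "card S \<le> CARD('a) - max_part" "threshold = sum y S"
    using top_sum_attained unfolding threshold_def by blast
  have "c * peak \<le> threshold" using empty v unfolding high_def by (metis empty_iff mem_Collect_eq not_le)
  also have "\<dots> \<le> real (card S) * peak" using S sum_le_card_peak by simp
  also have "\<dots> \<le> real (CARD('a) - max_part) * peak" using S peak_pos by simp
  finally have "c \<le> real (CARD('a) - max_part)" using peak_pos by simp
  then show False using assms max_part_le_card by simp
qed

definition high_weight :: real where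
  "high_weight = sum y high"

definition low_peak :: real where
  "low_peak = Max (y ` (- high))"

lemma low_peak_attained: "\<exists>w. w \<notin> high \<and> y w = low_peak"
proof -
  obtain w where "part_size w = max_part" using max_part_attained by blast
  then have "- high \<noteq> {}" using largest_part_not_high by blast
  then have "low_peak \<in> y ` (- high)" unfolding low_peak_def by (intro Max_in) auto
  then show ?thesis by auto
qed

lemma y_le_low_peak: "u \<notin> high \<Longrightarrow> y u \<le> low_peak"
  unfolding low_peak_def by (rule Max_ge) auto

lemma low_peak_le_high: "v \<in> high \<Longrightarrow> low_peak \<le> y v"
proof -
  assume v: "v \<in> high"
  obtain w where w: "w \<notin> high" "y w = low_peak" using low_peak_attained by blast
  have "c * y w < c * y v" using v w(1) unfolding high_def by simp
  then show ?thesis using w(2) c_pos by simp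
qed

lemma low_peak_nonneg: "low_peak \<ge> 0"
  using low_peak_attained y_nonneg by metis

lemma sum_le_high_split:
  "card S \<le> k \<Longrightarrow> sum y S \<le> high_weight + (real k - real (card high)) * low_peak"
  unfolding high_weight_def
  by (rule sum_le_separated[OF low_peak_le_high y_le_low_peak low_peak_nonneg])

lemma high_weight_le_threshold: "high_weight \<le> threshold"
  unfolding high_weight_def threshold_def by (rule sum_le_top_sum[OF card_high_le])

lemma low_peak_bound:
  "c * low_peak \<le> high_weight + (real CARD('a) - real max_part - real (card high)) * low_peak"
proof -
  obtain w where w: "w \<notin> high" "y w = low_peak" using low_peak_attained by blast
  obtain S where S: "card S \<le> CARD('a) - max_part" "threshold = sum y S"
    using top_sum_attained unfolding threshold_def by blast
  have "c * low_peak \<le> threshold" using w unfolding high_def by simp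
  also have "\<dots> \<le> high_weight + (real (CARD('a) - max_part) - real (card high)) * low_peak"
    using S sum_le_high_split by simp
  finally show ?thesis using max_part_le_card by simp
qed

lemma vertex_bound:
  "c * y v \<le> high_weight + (real CARD('a) - real (part_size v) - real (card high)) * low_peak"
proof -
  have deg: "card (Nb v) \<le> CARD('a) - part_size v"
    using degree_bound[of v] unfolding part_size_def by simp
  have "c * y v \<le> sum y (Nb v)" by (rule subeigen)
  also have "\<dots> \<le> high_weight + (real (CARD('a) - part_size v) - real (card high)) * low_peak"
    using sum_le_high_split[OF deg] .
  finally show ?thesis using degree_bound[of v] unfolding part_size_def by simp
qed

text \<open>Solving the vertex bound for \<open>|part(v)|\<close> gives an upper bound \<open>capacity v\<close>, whose sum
  over \<open>high\<close> has a closed form.\<close>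

definition capacity :: "'a \<Rightarrow> real" where
  "capacity v = real CARD('a) - real (card high) - (c * y v - high_weight) / low_peak"

lemma sum_capacity:
  "sum capacity high = real (card high) * (real CARD('a) - real (card high))
     - (c - real (card high)) * (high_weight / low_peak)"
proof -
  have "sum capacity high = (\<Sum>v\<in>high. real CARD('a) - real (card high))
      - (\<Sum>v\<in>high. (c * y v - high_weight) / low_peak)"
    unfolding capacity_def by (rule sum_subtractf)
  also have "(\<Sum>v\<in>high. (c * y v - high_weight) / low_peak)
      = (c * high_weight - real (card high) * high_weight) / low_peak"
    by (simp add: sum_divide_distrib[symmetric] sum_subtractf sum_distrib_left high_weight_def)
  finally show ?thesis by (simp add: algebra_simps diff_divide_distrib)
qed

text \<open>Splitting \<open>r = \<Sum>\<^sub>v 1/|part(v)|\<close> into a largest part (contributing 1), \<open>high\<close>, and the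
  remaining \<open>n - b - |high|\<close> vertices (each contributing at least \<open>1/b\<close>).\<close>

lemma r_decomposition:
  "real r \<ge> 1 + (\<Sum>v\<in>high. 1 / real (part_size v))
     + (real CARD('a) - real max_part - real (card high)) / real max_part"
proof -
  let ?g = "\<lambda>v. 1 / real (part_size v)"
  obtain w where w: "part_size w = max_part" using max_part_attained by blast
  define L where "L = {u. f u = f w}"
  define R where "R = UNIV - L - high"
  have high_sub: "high \<subseteq> UNIV - L" using largest_part_not_high w unfolding L_def by blast
  have L_size: "part_size u = max_part" if "u \<in> L" for u
    using that w unfolding L_def part_size_def by simp
  have card_L: "card L = max_part" using w unfolding L_def part_size_def by simp
  have "real r = sum ?g L + sum ?g (UNIV - L)"
    using sum_inverse_part_size sum.subset_diff[of L UNIV ?g] by (simp add: add.commute)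
  also have "sum ?g (UNIV - L) = sum ?g R + sum ?g high"
    unfolding R_def by (rule sum.subset_diff[OF high_sub]) simp
  also have "sum ?g L = 1" using L_size card_L max_part_pos by simp
  finally have r_eq: "real r = 1 + sum ?g R + sum ?g high" by simp
  have "card R = CARD('a) - max_part - card high"
    using high_sub card_L unfolding R_def by (simp add: card_Diff_subset)
  then have card_R: "real (card R) = real CARD('a) - real max_part - real (card high)"
    using card_high_le max_part_le_card by simp
  have "1 / real max_part \<le> ?g v" for v
    using part_size_le_max[of v] part_size_pos[of v] by (intro divide_left_mono) auto
  then have "real (card R) * (1 / real max_part) \<le> sum ?g R"
    using sum_bounded_below[of R "1 / real max_part" ?g] by auto
  then show ?thesis using r_eq card_R by simp
qed

text \<open>Summing \<open>\<theta> < c y\<^sub>v\<close> over \<open>high\<close> and using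
  \<open>high_weight \<le> \<theta>\<close> shows \<open>|high| < c\<close> and \<open>high_weight > 0\<close>.\<close>

context
  assumes high_nonempty: "high \<noteq> {}"
begin

lemma card_high_times_weight: "real (card high) * high_weight < c * high_weight"
proof -
  have "(\<Sum>v\<in>high. threshold) < (\<Sum>v\<in>high. c * y v)"
    by (rule sum_strict_mono) (use high_nonempty high_def in auto)
  then have "real (card high) * threshold < c * high_weight"
    by (simp add: high_weight_def sum_distrib_left)
  moreover have "real (card high) * high_weight \<le> real (card high) * threshold"
    using high_weight_le_threshold by (simp add: mult_left_mono)
  ultimately show ?thesis by linarith
qed

lemma high_weight_pos: "high_weight > 0"
proof -
  have "high_weight \<ge> 0" unfolding high_weight_def by (rule sum_nonneg) (use y_nonneg in auto)
  then show ?thesis using card_high_times_weight by (cases "high_weight = 0") auto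
qed

lemma card_high_less_c: "real (card high) < c"
  using card_high_times_weight high_weight_pos by simp

lemma low_peak_pos: "low_peak > 0"
proof (rule ccontr)
  assume "\<not> low_peak > 0"
  then have z: "low_peak = 0" using low_peak_nonneg by simp
  obtain v where v: "v \<in> high" using high_nonempty by blast
  have "c * y v \<le> high_weight" using vertex_bound[of v] z by simp
  moreover have "threshold < c * y v" using v unfolding high_def by simp
  ultimately show False using high_weight_le_threshold by simp
qed

lemma part_size_le_capacity:
  assumes "v \<in> high"
  shows "real (part_size v) \<le> capacity v"
proof -
  have "c * y v - high_weight \<le> (real CARD('a) - real (part_size v) - real (card high)) * low_peak"
    using vertex_bound[of v] by simp
  then have "(c * y v - high_weight) / low_peak \<le> real CARD('a) - real (part_size v) - real (card high)"
    using low_peak_pos by (simp add: pos_divide_le_eq)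
  then show ?thesis unfolding capacity_def by simp
qed

lemma capacity_pos: "v \<in> high \<Longrightarrow> capacity v > 0"
  using part_size_le_capacity part_size_pos[of v] by fastforce

text \<open>Harmonic-arithmetic mean on \<open>high\<close>, with part sizes bounded by capacities.\<close>

lemma high_inverse_sum:
  "real (card high) ^ 2 / sum capacity high \<le> (\<Sum>v\<in>high. 1 / real (part_size v))"
proof -
  have "real (card high) ^ 2 / sum capacity high \<le> (\<Sum>v\<in>high. 1 / capacity v)"
    by (rule harmonic_arithmetic_mean) (use high_nonempty capacity_pos in auto)
  also have "\<dots> \<le> (\<Sum>v\<in>high. 1 / real (part_size v))"
    using part_size_le_capacity part_size_pos capacity_pos
    by (intro sum_mono divide_left_mono) (auto simp: Suc_le_eq intro!: mult_pos_pos)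
  finally show ?thesis .
qed

text \<open>Eliminating \<open>high_weight / low_peak\<close> by the low-peak bound.\<close>

lemma sum_capacity_le:
  "sum capacity high \<le> real (card high) * real max_part
     - c * (real max_part - real CARD('a) + c)"
proof -
  have "c - real CARD('a) + real max_part + real (card high) \<le> high_weight / low_peak"
    using low_peak_bound low_peak_pos by (simp add: le_divide_eq algebra_simps)
  then have "(c - real (card high)) * (c - real CARD('a) + real max_part + real (card high))
      \<le> (c - real (card high)) * (high_weight / low_peak)"
    using card_high_less_c by (intro mult_left_mono) auto
  then show ?thesis unfolding sum_capacity by (simp add: algebra_simps)
qed

end

text \<open>The refined lower bound on \<open>r\<close> when \<open>c > n - b\<close>, in terms of \<open>n\<close>, \<open>b\<close> and \<open>c\<close> only:
  the bound obtained from \<open>high\<close> only decreases when \<open>|high|\<close> is replaced by \<open>n - b\<close>.\<close>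

lemma r_lower_bound:
  assumes c_large: "real CARD('a) - real max_part < c"
  defines "M \<equiv> real CARD('a) - real max_part"
    and "K \<equiv> c * (real max_part - real CARD('a) + c)"
  shows "real r \<ge> 1 + M\<^sup>2 / (M * real max_part - K)"
    and "M * real max_part - K > 0"
    and "real max_part < real CARD('a)"
proof -
  have ne: "high \<noteq> {}" using high_nonempty c_large by blast
  define N where "N = real (card high)"
  define T0 where "T0 = N * real max_part - K"
  have T_pos: "sum capacity high > 0"
    using capacity_pos[OF ne] ne by (simp add: sum_pos)
  have T_le: "sum capacity high \<le> T0"
    using sum_capacity_le[OF ne] unfolding T0_def N_def K_def .
  have NM: "N \<le> M" using card_high_le max_part_le_card unfolding N_def M_def by simp
  have K_pos: "K > 0" unfolding K_def using c_large c_pos by simp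
  have b_pos: "real max_part > 0" using max_part_pos by simp
  have "N\<^sup>2 / T0 \<le> N\<^sup>2 / sum capacity high"
    using T_le T_pos by (intro divide_left_mono) auto
  moreover have "M\<^sup>2 / (M * real max_part - K) - M / real max_part \<le> N\<^sup>2 / T0 - N / real max_part"
    using quotient_antimono[OF b_pos K_pos NM] T_le T_pos unfolding T0_def by simp
  moreover have "(M - N) / real max_part = M / real max_part - N / real max_part"
    by (simp add: diff_divide_distrib)
  ultimately show "real r \<ge> 1 + M\<^sup>2 / (M * real max_part - K)"
    using r_decomposition high_inverse_sum[OF ne] unfolding M_def N_def by linarith
  have "N * real max_part \<le> M * real max_part" using NM by (simp add: mult_right_mono)
  then show "M * real max_part - K > 0" using T_le T_pos unfolding T0_def by simp
  have "card high > 0" using ne by (simp add: card_gt_0_iff)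
  then show "real max_part < real CARD('a)" using card_high_le by linarith
qed

theorem subeigen_partition_estimate:
  "real CARD('a) / (real CARD('a) - c) < real r + 1/3"
proof (cases "c \<le> real CARD('a) - real max_part")
  case True
  then show ?thesis by (rule estimate_if_c_small)
next
  case False
  let ?n = "real CARD('a)" and ?b = "real max_part"
  have "?n / (?n - c) - 1/3 < 1 + (?n - ?b)\<^sup>2 / ((?n - ?b) * ?b - c * (?b - ?n + c))"
    using False c_less_card r_lower_bound(2,3)
    by (intro final_estimate) (auto simp: algebra_simps)
  then show ?thesis using r_lower_bound(1) False by fastforce
qed

end

text \<open>The partition into singletons is good, so \<open>\<phi>(G)\<close> is attained.\<close>

lemma phi_attained:
  fixes E :: "'a::finite \<Rightarrow> 'a \<Rightarrow> bool"
  assumes "simple_graph E"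
  shows "\<exists>f. good_partition E (phi E) f"
proof -
  obtain h :: "'a \<Rightarrow> nat" where h: "bij_betw h UNIV {0..<CARD('a)}"
    using ex_bij_betw_finite_nat[of "UNIV :: 'a set"] by auto
  have "{u. h u = h v} = {v}" for v using h unfolding bij_betw_def inj_on_def by auto
  moreover have "degree E v \<le> CARD('a) - 1" for v
  proof -
    have "{u. E v u} \<subset> UNIV" using assms unfolding simple_graph_def by blast
    then have "card {u. E v u} < CARD('a)" by (rule psubset_card_mono[OF finite])
    then show ?thesis unfolding degree_def by linarith
  qed
  ultimately have "good_partition E CARD('a) h"
    using h unfolding good_partition_def bij_betw_def by simp
  then have "\<exists>r f. good_partition E r f" by blast
  then show ?thesis unfolding phi_def by (rule LeastI_ex)
qed

lemma good_partition_degree_bound: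
  fixes E :: "'a::finite \<Rightarrow> 'a \<Rightarrow> bool"
  assumes "good_partition E r f"
  shows "card {u. E v u} + card {u. f u = f v} \<le> CARD('a)"
proof -
  have "card {u. f u = f v} \<le> CARD('a)" by (rule card_mono) auto
  then show ?thesis using assms unfolding good_partition_def degree_def by (metis le_diff_conv2 add.commute)
qed

theorem corollary12:
  fixes E :: "'a::finite \<Rightarrow> 'a \<Rightarrow> bool"
  assumes "simple_graph E"
  shows "real CARD('a) / (real CARD('a) - mu E) < real (phi E) + 1 / 3"
proof -
  obtain f where gp: "good_partition E (phi E) f" using phi_attained[OF assms] by blast
  then have parts: "f ` UNIV = {0..<phi E}" unfolding good_partition_def by simp
  show ?thesis
  proof (cases "mu E \<le> 0")
    case True
    have "phi E \<ge> 1" using parts by (cases "phi E") auto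
    moreover have "real CARD('a) / (real CARD('a) - mu E) \<le> 1"
      using True by (subst divide_le_eq_1) auto
    ultimately show ?thesis by linarith
  next
    case False
    obtain y where "\<And>v. y v \<ge> 0" "\<exists>v. y v > 0" "\<And>v. \<bar>mu E\<bar> * y v \<le> sum y {u. E v u}"
      using mu_subeigenvector[OF assms] by blast
    then interpret subeigen_partition y "\<lambda>v. {u. E v u}" f "mu E" "phi E"
      using False assms parts good_partition_degree_bound[OF gp]
      by unfold_locales (auto simp: simple_graph_def)
    show ?thesis using subeigen_partition_estimate by simp
  qed
qed

end
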